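(* For every positive integer $n$, the map $\Psi_{\mathrm{PF}\to\mathrm{Luk}}:\mathrm{PF}_n^{\mathrm{inc}}\to\mathrm{Luk}_n$ is a bijection. Moreover, for every $p\in\mathrm{PF}_n^{\mathrm{inc}}$ we have $|\mathrm{disp}(p)|=\mathrm{Area}(\Psi_{\mathrm{PF}\to\mathrm{Luk}}(p))$ and $\max(\mathrm{disp}(p))=\mathrm{Height}(\Psi_{\mathrm{PF}\to\mathrm{Luk}}(p))$.
   Context: Let $n\ge 1$ and $[n]=\{1,\dots,n\}$. A parking preference is $p=(p_1,\dots,p_n)\in[n]^n$. Cars $1,\dots,n$ enter a one-way car park with spots $1,\dots,n$ in order; car $i$ parks in the first unoccupied spot $k\ge p_i$, and fails to park if there is none. $p$ is a parking function if all cars park; $\mathrm{PF}_n$ denotes the set of parking functions, and $\mathrm{PF}_n^{\mathrm{inc}}$ the set of those with $p_1\le p_2\le\dots\le p_n$. If car $i$ parks in spot $o_i$, its displacement is $d_i=o_i-p_i$; $\mathrm{disp}(p)=(d_1,\dots,d_n)$, $|\mathrm{disp}(p)|=\sum_i d_i$, and $\max(\mathrm{disp}(p))=\max_i d_i$. A Łukasiewicz word of length $n$ is a sequence $\ell=(\ell_1,\dots,\ell_n)$ of integers $\ell_i\ge -1$ with $\sum_{i=1}^k\ell_i\ge 0$ for all $k\in[n]$ and $\sum_{i=1}^n\ell_i=0$; $\mathrm{Luk}_n$ is the set of these. It is identified with the lattice path from $(0,0)$ whose $i$-th step is the vector $(\ell_i+1,\ell_i)$ (it ends at $(n,0)$ and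 never goes below the $x$-axis). Write $h(\ell;j)=\sum_{i=1}^j\ell_i$ ($h(\ell;0)=0$). $\mathrm{Height}(\ell)$ is the largest $y$-coordinate reached by the path, i.e. $\max_j h(\ell;j)$. $\mathrm{Area}(\ell)$ is the area between the path and the $x$-axis; equivalently, $\mathrm{Area}(\ell)=\sum_{j=1}^n \frac{(\ell_j+1)(2h(\ell;j-1)+\ell_j)}{2}$. The map $\Psi_{\mathrm{PF}\to\mathrm{Luk}}$ sends $p\in\mathrm{PF}_n$ to $\ell=(\ell_1,\dots,\ell_n)$ with $\ell_i=|\{j\in[n]: p_j=i\}|-1$. *)

theory Defs
  imports Complex_Main
begin

(* Preferences are lists: car i (1-based) has preference p ! (i-1). Spots are 1-based. *)

(* Parking process: each car takes the least spot k \<ge> its preference not yet occupied.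
   If no spot \<le> n is free the returned spot is > n (i.e. the car fails). *)
fun park_spots_aux :: "nat set \<Rightarrow> nat list \<Rightarrow> nat list" where
  "park_spots_aux S [] = []"
| "park_spots_aux S (a # as) =
     (let k = (LEAST k. a \<le> k \<and> k \<notin> S) in k # park_spots_aux (insert k S) as)"

definition park_spots :: "nat list \<Rightarrow> nat list" where
  "park_spots p = park_spots_aux {} p"

definition PF :: "nat \<Rightarrow> nat list set" where
  "PF n = {p. length p = n \<and> set p \<subseteq> {1..n} \<and> set (park_spots p) \<subseteq> {1..n}}"

definition PF_inc :: "nat \<Rightarrow> nat list set" where
  "PF_inc n = {p \<in> PF n. sorted p}"

definition disp :: "nat list \<Rightarrow> nat list" where
  "disp p = map2 (\<lambda>s a. s - a) (park_spots p) p"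

definition Luk :: "nat \<Rightarrow> int list set" where
  "Luk n = {l. length l = n \<and> (\<forall>x\<in>set l. x \<ge> -1)
              \<and> (\<forall>k\<in>{1..n}. sum_list (take k l) \<ge> 0) \<and> sum_list l = 0}"

definition hgt :: "int list \<Rightarrow> nat \<Rightarrow> int" where
  "hgt l j = sum_list (take j l)"

definition Height :: "int list \<Rightarrow> int" where
  "Height l = Max ((hgt l) ` {0..length l})"

definition Area :: "int list \<Rightarrow> real" where
  "Area l = (\<Sum>j=1..length l.
      (of_int (l ! (j-1)) + 1) * (2 * of_int (hgt l (j-1)) + of_int (l ! (j-1))) / 2)"

definition Psi_PF_Luk :: "nat \<Rightarrow> nat list \<Rightarrow> int list" where
  "Psi_PF_Luk n p = map (\<lambda>i. int (count_list p i) - 1) [1..<n+1]"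

end

(* An increasing parking function is exactly a sorted list with p_i <= i for every i (if
   p_i > i, the cars i, ..., n would need n - i + 1 distinct spots among i + 1, ..., n); then car i
   parks in spot i and its displacement is i - p_i.

   Writing c j for the number of cars preferring a spot <= j, the Lukasiewicz path of p has height
   c j - j after j steps. It is nonnegative exactly when p_i <= i for all i, and p is recovered from
   its path by sorting the multiset with l_j + 1 copies of j.

   The total displacement is n(n+1)/2 - sum p, and the area under the first k steps telescopes to
   c k (c k + 1)/2 minus the sum of the preferences <= k. The displacement i - p_i of car i is at
   most the height at p_i, and the height at j is at most the displacement of the last car
   preferring a spot <= j, so the maxima agree. *)

theory Submission
  imports Defs "HOL-Library.Multiset"
begin

lemma length_park_spots_aux [simp]: "length (park_spots_aux S as) = length as"
  by (induction as arbitrary: S) (auto simp: Let_def)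

lemma free_spot_exists: "finite S \<Longrightarrow> \<exists>k. a \<le> k \<and> k \<notin> (S :: nat set)"
  using ex_new_if_finite[OF infinite_UNIV_nat, of "S \<union> {..<a}"] by (force simp: not_less)

lemma park_spots_aux_distinct:
  "finite S \<Longrightarrow> distinct (park_spots_aux S as) \<and> set (park_spots_aux S as) \<inter> S = {}"
proof (induction as arbitrary: S)
  case Nil
  then show ?case by simp
next
  case (Cons a as)
  let ?k = "LEAST k. a \<le> k \<and> k \<notin> S"
  have "?k \<notin> S"
    using LeastI_ex[OF free_spot_exists[OF Cons.prems]] by blast
  then show ?case
    using Cons.IH[of "insert ?k S"] Cons.prems by (auto simp: Let_def)
qed

lemma park_spots_aux_nth_ge:
  "finite S \<Longrightarrow> i < length as \<Longrightarrow> as ! i \<le> park_spots_aux S as ! i"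
proof (induction as arbitrary: S i)
  case Nil
  then show ?case by simp
next
  case (Cons a as)
  let ?k = "LEAST k. a \<le> k \<and> k \<notin> S"
  have "a \<le> ?k"
    using LeastI_ex[OF free_spot_exists[OF Cons.prems(1)]] by blast
  then show ?case
    using Cons by (cases i) (auto simp: Let_def)
qed

lemma park_spots_aux_consecutive:
  assumes "\<forall>i<length as. 1 \<le> as ! i \<and> as ! i \<le> m + 1 + i"
  shows "park_spots_aux {1..m} as = [m+1..<m+1+length as]"
  using assms
proof (induction as arbitrary: m)
  case Nil
  then show ?case by simp
next
  case (Cons a as)
  have "1 \<le> a" "a \<le> m + 1"
    using Cons.prems[rule_format, of 0] by auto
  then have "(LEAST k. a \<le> k \<and> k \<notin> {1..m}) = m + 1"
    by (intro Least_equality) auto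
  moreover have "insert (m + 1) {1..m} = {1..Suc m}"
    by auto
  moreover have "park_spots_aux {1..Suc m} as = [Suc m+1..<Suc m+1+length as]"
    using Cons.prems by (intro Cons.IH) fastforce
  ultimately show ?case
    by (simp add: Let_def upt_conv_Cons del: upt_Suc)
qed

lemma sorted_PF_nth_le_Suc:
  assumes "p \<in> PF n" "sorted p" "i < n"
  shows "p ! i \<le> Suc i"
proof (rule ccontr)
  assume "\<not> p ! i \<le> Suc i"
  define spots where "spots = park_spots p"
  have len: "length p = n" "length spots = n" and range: "set spots \<subseteq> {1..n}"
    using assms(1) by (auto simp: PF_def spots_def park_spots_def)
  have "distinct spots"
    using park_spots_aux_distinct[of "{}" p] by (simp add: spots_def park_spots_def)
  then have "inj_on ((!) spots) {i..<n}"
    using len by (auto simp: inj_on_def nth_eq_iff_index_eq)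
  moreover have "(!) spots ` {i..<n} \<subseteq> {i+2..n}"
  proof (rule image_subsetI)
    fix j assume "j \<in> {i..<n}"
    then have j: "i \<le> j" "j < n"
      by auto
    have "p ! i \<le> p ! j"
      using assms(2) j len by (simp add: sorted_iff_nth_mono)
    also have "p ! j \<le> spots ! j"
      using park_spots_aux_nth_ge[of "{}" j p] j len by (simp add: spots_def park_spots_def)
    moreover have "spots ! j \<in> {1..n}"
      using range j len by (metis nth_mem subsetD)
    ultimately show "spots ! j \<in> {i+2..n}"
      using \<open>\<not> p ! i \<le> Suc i\<close> by auto
  qed
  ultimately have "card {i..<n} \<le> card {i+2..n}"
    by (intro card_inj_on_le) auto
  then show False
    using assms(3) by simp
qed

lemma PF_inc_iff:
  "p \<in> PF_inc n \<longleftrightarrow>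
    sorted p \<and> length p = n \<and> (\<forall>i<n. 1 \<le> p ! i \<and> p ! i \<le> Suc i)"
proof
  assume "p \<in> PF_inc n"
  then have p: "p \<in> PF n" "sorted p" "length p = n" "set p \<subseteq> {1..n}"
    by (auto simp: PF_inc_def PF_def)
  have "1 \<le> p ! i" if "i < n" for i
    using p(3,4) that by (metis atLeastAtMost_iff nth_mem subsetD)
  then show "sorted p \<and> length p = n \<and> (\<forall>i<n. 1 \<le> p ! i \<and> p ! i \<le> Suc i)"
    using p sorted_PF_nth_le_Suc by blast
next
  assume p: "sorted p \<and> length p = n \<and> (\<forall>i<n. 1 \<le> p ! i \<and> p ! i \<le> Suc i)"
  then have "park_spots p = [1..<n+1]"
    using park_spots_aux_consecutive[of p 0] by (simp add: park_spots_def)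
  moreover have "set p \<subseteq> {1..n}"
    using p by (fastforce simp: in_set_conv_nth)
  ultimately show "p \<in> PF_inc n"
    using p by (auto simp: PF_inc_def PF_def)
qed

lemma disp_PF_inc:
  assumes "p \<in> PF_inc n"
  shows "disp p = map (\<lambda>i. Suc i - p ! i) [0..<n]"
proof -
  have "park_spots p = [1..<n+1]"
    using assms park_spots_aux_consecutive[of p 0] by (simp add: PF_inc_iff park_spots_def)
  then show ?thesis
    using assms by (intro nth_equalityI) (auto simp: disp_def PF_inc_iff simp del: upt_Suc)
qed

lemma set_PF_inc: "p \<in> PF_inc n \<Longrightarrow> set p \<subseteq> {1..n}"
  by (simp add: PF_inc_def PF_def)

definition count_le :: "nat list \<Rightarrow> nat \<Rightarrow> nat" where
  "count_le p k = length (filter (\<lambda>x. x \<le> k) p)"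

lemma count_le_Suc: "count_le p (Suc k) = count_le p k + count_list p (Suc k)"
  unfolding count_le_def by (induction p) auto

lemma count_le_0: "0 \<notin> set p \<Longrightarrow> count_le p 0 = 0"
  unfolding count_le_def by (induction p) auto

lemma count_le_eq_length: "set p \<subseteq> {..k} \<Longrightarrow> count_le p k = length p"
  unfolding count_le_def by (metis atMost_iff filter_True subsetD)

lemma sorted_nth_le_iff_less_count_le:
  assumes "sorted p" "i < length p"
  shows "p ! i \<le> k \<longleftrightarrow> i < count_le p k"
proof
  assume "p ! i \<le> k"
  then have "{0..i} \<subseteq> {j. j < length p \<and> p ! j \<le> k}"
    using assms by (auto intro: le_trans[OF sorted_nth_mono[OF assms(1)]])
  then have "card {0..i} \<le> card {j. j < length p \<and> p ! j \<le> k}"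
    by (intro card_mono) auto
  then show "i < count_le p k"
    by (simp add: count_le_def length_filter_conv_card)
next
  assume "i < count_le p k"
  show "p ! i \<le> k"
  proof (rule ccontr)
    assume "\<not> p ! i \<le> k"
    then have "{j. j < length p \<and> p ! j \<le> k} \<subseteq> {0..<i}"
      using assms by (auto simp: sorted_iff_nth_mono) (meson le_trans not_le)
    then have "card {j. j < length p \<and> p ! j \<le> k} \<le> card {0..<i}"
      by (intro card_mono) auto
    with \<open>i < count_le p k\<close> show False
      by (simp add: count_le_def length_filter_conv_card)
  qed
qed

lemma nth_Psi_PF_Luk: "i < n \<Longrightarrow> Psi_PF_Luk n p ! i = int (count_list p (Suc i)) - 1"
  by (simp add: Psi_PF_Luk_def del: upt_Suc)

lemma length_Psi_PF_Luk [simp]: "length (Psi_PF_Luk n p) = n"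
  by (simp add: Psi_PF_Luk_def)

lemma hgt_Psi_PF_Luk:
  assumes "0 \<notin> set p" "k \<le> n"
  shows "hgt (Psi_PF_Luk n p) k = int (count_le p k) - int k"
proof -
  have "hgt (Psi_PF_Luk n p) k = (\<Sum>j\<leftarrow>[1..<Suc k]. int (count_list p j) - 1)"
    using assms(2) by (simp add: hgt_def Psi_PF_Luk_def take_map del: upt_Suc)
  also have "\<dots> = (\<Sum>j=1..k. int (count_list p j)) - int k"
    by (simp add: sum_list_distinct_conv_sum_set atLeastLessThanSuc_atLeastAtMost sum_subtractf
             del: upt_Suc)
  also have "(\<Sum>j=1..k. int (count_list p j)) = int (count_le p k)"
    using assms(1) by (induction k) (simp_all add: count_le_0 count_le_Suc)
  finally show ?thesis .
qed

lemma Psi_PF_Luk_in_Luk: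
  assumes "p \<in> PF_inc n"
  shows "Psi_PF_Luk n p \<in> Luk n"
proof -
  have p: "sorted p" "length p = n" "\<forall>i<n. p ! i \<le> Suc i" and range: "set p \<subseteq> {1..n}"
    using assms set_PF_inc by (auto simp: PF_inc_iff)
  then have "0 \<notin> set p"
    by auto
  have "hgt (Psi_PF_Luk n p) k \<ge> 0" if "k \<in> {1..n}" for k
  proof -
    have "k - 1 < n" "Suc (k - 1) = k"
      using that by auto
    then have "k - 1 < count_le p k"
      using p sorted_nth_le_iff_less_count_le[of p "k - 1" k] by metis
    then show ?thesis
      using that hgt_Psi_PF_Luk[OF \<open>0 \<notin> set p\<close>, of k n] by simp
  qed
  moreover have "hgt (Psi_PF_Luk n p) n = 0"
  proof -
    have "count_le p n = n"
      using range p(2) by (subst count_le_eq_length) auto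
    then show ?thesis
      using hgt_Psi_PF_Luk[OF \<open>0 \<notin> set p\<close>, of n n] by simp
  qed
  ultimately show ?thesis
    by (auto simp: Luk_def hgt_def Psi_PF_Luk_def)
qed

definition Psi_Luk_PF :: "nat \<Rightarrow> int list \<Rightarrow> nat list" where
  "Psi_Luk_PF n l = sorted_list_of_multiset (\<Sum>j\<in>{1..n}. replicate_mset (nat (l ! (j - 1) + 1)) j)"

lemma count_list_Psi_Luk_PF:
  "count_list (Psi_Luk_PF n l) x = (if x \<in> {1..n} then nat (l ! (x - 1) + 1) else 0)"
  by (simp add: Psi_Luk_PF_def count_sum count_replicate_mset if_distrib sum.If_cases
      flip: count_mset cong: if_cong)

lemma set_Psi_Luk_PF: "set (Psi_Luk_PF n l) \<subseteq> {1..n}"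
proof
  fix x assume "x \<in> set (Psi_Luk_PF n l)"
  then have "count_list (Psi_Luk_PF n l) x \<noteq> 0"
    by (simp add: count_list_0_iff)
  then show "x \<in> {1..n}"
    by (auto simp: count_list_Psi_Luk_PF split: if_splits)
qed

lemma Psi_PF_Luk_Psi_Luk_PF:
  assumes "length l = n" "\<forall>x\<in>set l. x \<ge> -1"
  shows "Psi_PF_Luk n (Psi_Luk_PF n l) = l"
proof (rule nth_equalityI)
  show "length (Psi_PF_Luk n (Psi_Luk_PF n l)) = length l"
    using assms by simp
next
  fix i assume "i < length (Psi_PF_Luk n (Psi_Luk_PF n l))"
  then have "i < n" "l ! i \<ge> -1"
    using assms by auto
  then show "Psi_PF_Luk n (Psi_Luk_PF n l) ! i = l ! i"
    by (simp add: nth_Psi_PF_Luk count_list_Psi_Luk_PF)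
qed

lemma Psi_Luk_PF_in_PF_inc:
  assumes "l \<in> Luk n"
  shows "Psi_Luk_PF n l \<in> PF_inc n"
proof -
  define p where "p = Psi_Luk_PF n l"
  have "sorted p"
    by (simp add: p_def Psi_Luk_PF_def)
  have range: "set p \<subseteq> {1..n}"
    unfolding p_def by (rule set_Psi_Luk_PF)
  then have "0 \<notin> set p"
    by auto
  have "Psi_PF_Luk n p = l"
    using assms by (simp add: p_def Luk_def Psi_PF_Luk_Psi_Luk_PF)
  then have hgt: "hgt l k = int (count_le p k) - int k" if "k \<le> n" for k
    using hgt_Psi_PF_Luk[OF \<open>0 \<notin> set p\<close> that] by simp
  have "count_le p n = length p"
    using range by (subst count_le_eq_length) auto
  then have "length p = n"
    using hgt[of n] assms by (auto simp: Luk_def hgt_def)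
  moreover have "p ! i \<le> Suc i" if "i < n" for i
  proof -
    have "hgt l (Suc i) \<ge> 0"
      using assms that by (simp add: Luk_def hgt_def)
    then have "i < count_le p (Suc i)"
      using hgt[of "Suc i"] that by simp
    then show ?thesis
      using sorted_nth_le_iff_less_count_le[OF \<open>sorted p\<close>] that \<open>length p = n\<close> by simp
  qed
  moreover have "1 \<le> p ! i" if "i < n" for i
    using range that \<open>length p = n\<close> by (metis atLeastAtMost_iff nth_mem subsetD)
  ultimately show ?thesis
    using \<open>sorted p\<close> by (simp add: PF_inc_iff p_def)
qed

lemma Psi_Luk_PF_Psi_PF_Luk:
  assumes "p \<in> PF_inc n"
  shows "Psi_Luk_PF n (Psi_PF_Luk n p) = p"
proof -
  have "count_list (Psi_Luk_PF n (Psi_PF_Luk n p)) x = count_list p x" for x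
    using set_PF_inc[OF assms]
    by (auto simp: count_list_Psi_Luk_PF nth_Psi_PF_Luk count_list_0_iff)
  then have "mset (Psi_Luk_PF n (Psi_PF_Luk n p)) = mset p"
    by (simp add: multiset_eq_iff flip: count_mset)
  moreover have "sorted (Psi_Luk_PF n (Psi_PF_Luk n p))"
    by (simp add: Psi_Luk_PF_def)
  ultimately have "sort p = Psi_Luk_PF n (Psi_PF_Luk n p)"
    by (rule properties_for_sort)
  then show ?thesis
    using assms by (simp add: PF_inc_iff sorted_sort_id)
qed

lemma bij_betw_Psi_PF_Luk: "bij_betw (Psi_PF_Luk n) (PF_inc n) (Luk n)"
proof (rule bij_betw_byWitness[where f' = "Psi_Luk_PF n"])
  show "\<forall>l\<in>Luk n. Psi_PF_Luk n (Psi_Luk_PF n l) = l"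
    by (simp add: Luk_def Psi_PF_Luk_Psi_Luk_PF)
qed (auto simp: Psi_Luk_PF_Psi_PF_Luk Psi_PF_Luk_in_Luk Psi_Luk_PF_in_PF_inc)

lemma sum_disp_PF_inc:
  assumes "p \<in> PF_inc n"
  shows "real (sum_list (disp p)) = real n * (real n + 1) / 2 - real (sum_list p)"
proof -
  have p: "length p = n" "\<forall>i<n. p ! i \<le> Suc i"
    using assms by (auto simp: PF_inc_iff)
  have "sum_list (disp p) = (\<Sum>i<n. Suc i - p ! i)"
    by (simp add: disp_PF_inc[OF assms] sum_set_upt_conv_sum_list_nat[symmetric] atLeast0LessThan
        del: upt_Suc)
  then have "real (sum_list (disp p)) = (\<Sum>i<n. real (Suc i) - real (p ! i))"
    using p(2) by (simp add: of_nat_diff)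
  also have "\<dots> = (\<Sum>i<n. real (Suc i)) - (\<Sum>i<n. real (p ! i))"
    by (rule sum_subtractf)
  also have "(\<Sum>i<n. real (Suc i)) = real n * (real n + 1) / 2"
    by (induction n) (simp_all add: field_simps)
  also have "(\<Sum>i<n. real (p ! i)) = real (sum_list p)"
    using p(1) by (simp add: sum_list_sum_nth atLeast0LessThan)
  finally show ?thesis .
qed

lemma Area_Psi_PF_Luk:
  assumes "0 \<notin> set p"
  shows "Area (Psi_PF_Luk n p)
    = real (count_le p n) * (real (count_le p n) + 1) / 2 - real (sum_list (filter (\<lambda>x. x \<le> n) p))"
proof -
  let ?c = "\<lambda>j. real (count_list p j)"
  define step where
    "step j = ?c j * (2 * (real (count_le p (j - 1)) - real j + 1) + ?c j - 1) / 2" for j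
  have "Area (Psi_PF_Luk n p) = (\<Sum>j=1..n. step j)"
    unfolding Area_def length_Psi_PF_Luk
  proof (intro sum.cong refl)
    fix j assume "j \<in> {1..n}"
    then have "j - 1 < n" "Suc (j - 1) = j"
      by auto
    then have l: "Psi_PF_Luk n p ! (j - 1) = int (count_list p j) - 1"
      and h: "hgt (Psi_PF_Luk n p) (j - 1) = int (count_le p (j - 1)) - int (j - 1)"
      using nth_Psi_PF_Luk[of "j - 1" n p] hgt_Psi_PF_Luk[OF assms, of "j - 1" n] by simp_all
    show "(of_int (Psi_PF_Luk n p ! (j - 1)) + 1)
        * (2 * of_int (hgt (Psi_PF_Luk n p) (j - 1)) + of_int (Psi_PF_Luk n p ! (j - 1))) / 2 = step j"
      unfolding l h using \<open>j \<in> {1..n}\<close> by (simp add: step_def of_nat_diff algebra_simps)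
  qed
  also have "(\<Sum>j=1..k. step j)
    = real (count_le p k) * (real (count_le p k) + 1) / 2 - real (sum_list (filter (\<lambda>x. x \<le> k) p))"
    for k
  proof (induction k)
    case 0
    then show ?case
      using assms count_le_0[OF assms] by (simp add: filter_False)
  next
    case (Suc k)
    have "sum_list (filter (\<lambda>x. x \<le> Suc k) p)
        = sum_list (filter (\<lambda>x. x \<le> k) p) + Suc k * count_list p (Suc k)"
      by (induction p) auto
    with Suc show ?case
      by (simp add: step_def count_le_Suc algebra_simps add_divide_distrib diff_divide_distrib)
  qed
  finally show ?thesis .
qed

lemma sum_disp_eq_Area:
  assumes "p \<in> PF_inc n"
  shows "real (sum_list (disp p)) = Area (Psi_PF_Luk n p)"
proof -
  have range: "set p \<subseteq> {1..n}" and "length p = n"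
    using assms set_PF_inc by (auto simp: PF_inc_iff)
  have "count_le p n = length p"
    using range by (intro count_le_eq_length) auto
  moreover have "filter (\<lambda>x. x \<le> n) p = p"
    using range by (auto simp: filter_id_conv)
  moreover have "0 \<notin> set p"
    using range by auto
  ultimately show ?thesis
    using \<open>length p = n\<close> by (simp add: sum_disp_PF_inc[OF assms] Area_Psi_PF_Luk)
qed

lemma Max_eq_if_cofinal:
  fixes A B :: "'a::linorder set"
  assumes "finite A" "A \<noteq> {}" "finite B" "B \<noteq> {}"
    and "\<forall>a\<in>A. \<exists>b\<in>B. a \<le> b" "\<forall>b\<in>B. \<exists>a\<in>A. b \<le> a"
  shows "Max A = Max B"
  using assms by (meson Max_ge_iff Max_in antisym)

lemma disp_le_height_PF_inc:
  assumes "p \<in> PF_inc n" "i < n"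
  shows "\<exists>j\<le>n. int (Suc i) - int (p ! i) \<le> int (count_le p j) - int j"
proof -
  have "p ! i \<le> Suc i" "length p = n" "sorted p"
    using assms by (auto simp: PF_inc_iff)
  then have "p ! i \<le> n" "i < count_le p (p ! i)"
    using assms(2) sorted_nth_le_iff_less_count_le[of p i "p ! i"] by auto
  then show ?thesis
    by (intro exI[of _ "p ! i"]) auto
qed

lemma height_le_disp_PF_inc:
  assumes "p \<in> PF_inc n" "n \<ge> 1"
  shows "\<exists>i<n. int (count_le p j) - int j \<le> int (Suc i) - int (p ! i)"
proof (cases "count_le p j = 0")
  case True
  have "p ! 0 \<le> 1"
    using assms by (auto simp: PF_inc_iff)
  then show ?thesis
    using True assms(2) by (intro exI[of _ 0]) auto
next
  case False
  \<comment> \<open>the last car with preference at most \<open>j\<close>\<close>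
  define i where "i = count_le p j - 1"
  have p: "sorted p" "length p = n"
    using assms by (auto simp: PF_inc_iff)
  then have "count_le p j \<le> n"
    by (metis count_le_def length_filter_le)
  then have "i < n" "p ! i \<le> j" "Suc i = count_le p j"
    using False p sorted_nth_le_iff_less_count_le[of p i j] by (auto simp: i_def)
  then show ?thesis
    by (intro exI[of _ i]) auto
qed

lemma Max_disp_PF_inc:
  assumes "p \<in> PF_inc n" "n \<ge> 1"
  shows "int (Max (set (disp p))) = Height (Psi_PF_Luk n p)"
proof -
  have "0 \<notin> set p"
    using set_PF_inc[OF assms(1)] by auto
  define d where "d i = int (Suc i) - int (p ! i)" for i
  define h where "h j = int (count_le p j) - int j" for j
  have "int (Max (set (disp p))) = Max (int ` set (disp p))"
    using assms by (intro mono_Max_commute) (auto simp: mono_def disp_PF_inc)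
  also have "int ` set (disp p) = d ` {..<n}"
    using assms(1) by (force simp: disp_PF_inc PF_inc_iff d_def of_nat_diff)
  also have "Max (d ` {..<n}) = Max (h ` {0..n})"
  proof (rule Max_eq_if_cofinal)
    show "\<forall>a\<in>d ` {..<n}. \<exists>b\<in>h ` {0..n}. a \<le> b"
      using disp_le_height_PF_inc[OF assms(1)] by (fastforce simp: d_def h_def)
    show "\<forall>b\<in>h ` {0..n}. \<exists>a\<in>d ` {..<n}. b \<le> a"
      using height_le_disp_PF_inc[OF assms] by (fastforce simp: d_def h_def)
  qed (use assms(2) in \<open>auto simp: lessThan_empty_iff\<close>)
  also have "h ` {0..n} = hgt (Psi_PF_Luk n p) ` {0..n}"
    using \<open>0 \<notin> set p\<close> by (intro image_cong) (simp_all add: h_def hgt_Psi_PF_Luk)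
  finally show ?thesis
    unfolding Height_def length_Psi_PF_Luk .
qed

theorem theorem2p1:
  fixes n :: nat
  assumes "n \<ge> 1"
  shows "bij_betw (Psi_PF_Luk n) (PF_inc n) (Luk n)
    \<and> (\<forall>p\<in>PF_inc n.
          real (sum_list (disp p)) = Area (Psi_PF_Luk n p)
        \<and> int (Max (set (disp p))) = Height (Psi_PF_Luk n p))"
  using assms by (simp add: bij_betw_Psi_PF_Luk sum_disp_eq_Area Max_disp_PF_inc)

end
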